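(* For diagonal physical $Q=\operatorname{diag}(\lambda_1,\lambda_2,\lambda_3)$ with $-\tfrac13<\lambda_1\le\lambda_2\le\lambda_3<\tfrac23$, $\lambda_1+\lambda_2+\lambda_3=0$, the Lagrange multiplier $\mu_1$ of its optimal density satisfies $\mu_1\to-\infty$ as $\lambda_1\to-\tfrac13$; that is, for every $M>0$ there is $\eta>0$ such that $\lambda_1+\tfrac13<\eta$ implies $\mu_1<-M$.
   Context: Points of the unit sphere $\mathbb S^2$ are written $(x,y,z)$, and $\mathrm dS$ is surface measure. For a physical $Q$ (symmetric traceless with all eigenvalues in $(-\tfrac13,\tfrac23)$) the Ball–Majumdar potential is $f(Q)=\inf\int_{\mathbb S^2}\rho\ln\rho\,\mathrm dS$ over even probability densities $\rho$ with $\int(\mathbf n\otimes\mathbf n-\tfrac13I_3)\rho\,\mathrm dS=Q$. For diagonal physical $Q=\operatorname{diag}(\lambda_1,\lambda_2,\lambda_3)$ this infimum is attained by $\rho_Q(x,y,z)=\exp(\mu_1x^2+\mu_2y^2+\mu_3z^2)/Z$, $Z=\int_{\mathbb S^2}\exp(\mu_1x^2+\mu_2y^2+\mu_3z^2)\,\mathrm dS$, where the Lagrange multipliers $\mu_1,\mu_2,\mu_3\in\mathbb R$ satisfy $\mu_1+\mu_2+\mu_3=0$ and $\int x^2\rho_Q\,\mathrm dS=\lambda_1+\tfrac13$, $\int y^2\rho_Q\,\mathrm dS=\lambda_2+\tfrac13$, $\int z^2\rho_Q\,\mathrm dS=\lambda_3+\tfrac13$. *)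

theory Defs
  imports "HOL-Analysis.Analysis"
begin

text \<open>Integral over the unit sphere S^2 with respect to surface measure dS,
  written in spherical coordinates
  (x,y,z) = (sin t cos p, sin t sin p, cos t), dS = sin t dt dp,
  with t in [0,pi] and p in [0,2 pi].\<close>
definition sphere_integral :: "(real \<Rightarrow> real \<Rightarrow> real \<Rightarrow> real) \<Rightarrow> real" where
  "sphere_integral g =
     integral (cbox (0, 0) (pi, 2 * pi))
       (\<lambda>(t, p). g (sin t * cos p) (sin t * sin p) (cos t) * sin t)"

definition bm_weight :: "real \<Rightarrow> real \<Rightarrow> real \<Rightarrow> real \<Rightarrow> real \<Rightarrow> real \<Rightarrow> real" where
  "bm_weight \<mu>1 \<mu>2 \<mu>3 x y z = exp (\<mu>1 * x\<^sup>2 + \<mu>2 * y\<^sup>2 + \<mu>3 * z\<^sup>2)"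

definition bm_Z :: "real \<Rightarrow> real \<Rightarrow> real \<Rightarrow> real" where
  "bm_Z \<mu>1 \<mu>2 \<mu>3 = sphere_integral (bm_weight \<mu>1 \<mu>2 \<mu>3)"

definition bm_rho :: "real \<Rightarrow> real \<Rightarrow> real \<Rightarrow> real \<Rightarrow> real \<Rightarrow> real \<Rightarrow> real" where
  "bm_rho \<mu>1 \<mu>2 \<mu>3 x y z = bm_weight \<mu>1 \<mu>2 \<mu>3 x y z / bm_Z \<mu>1 \<mu>2 \<mu>3"

definition bm_multipliers :: "real \<Rightarrow> real \<Rightarrow> real \<Rightarrow> real \<Rightarrow> real \<Rightarrow> real \<Rightarrow> bool" where
  "bm_multipliers l1 l2 l3 \<mu>1 \<mu>2 \<mu>3 \<longleftrightarrow>
     \<mu>1 + \<mu>2 + \<mu>3 = 0 \<and>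
     sphere_integral (\<lambda>x y z. x\<^sup>2 * bm_rho \<mu>1 \<mu>2 \<mu>3 x y z) = l1 + 1/3 \<and>
     sphere_integral (\<lambda>x y z. y\<^sup>2 * bm_rho \<mu>1 \<mu>2 \<mu>3 x y z) = l2 + 1/3 \<and>
     sphere_integral (\<lambda>x y z. z\<^sup>2 * bm_rho \<mu>1 \<mu>2 \<mu>3 x y z) = l3 + 1/3"

end

theory Submission
  imports Defs
begin

(* Write <q> for the sphere integral of q against w = exp(mu1 x^2 + mu2 y^2 + mu3 z^2), so that
   l1 + 1/3 = <x^2>/<1>, and similarly for l2, l3. Ordered eigenvalues force mu1 to be the smallest
   multiplier. If mu1 > mu2, then <x^2> > <y^2>: compare w with the weight in which mu1 and mu2 are
   replaced by their mean, which on the sphere depends on z alone and is therefore orthogonal to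
   x^2 - y^2. If mu1 > mu3 (hence mu2 > mu3), then an integration by parts in the polar angle gives
   <x^2 + y^2 - 2 z^2> = 2 <z^2 ((mu1 - mu3) x^2 + (mu2 - mu3) y^2)> > 0, contradicting
   l1 + l2 <= 2 l3. As the multipliers sum to 0, mu1 >= -M then bounds all of them by 2M, so
   exp(-2M) <= w <= exp(2M) on the sphere, and l1 + 1/3 is bounded below by a positive constant
   depending only on M. *)

lemma sphere_coords_on_sphere: "(sin t * cos p)\<^sup>2 + (sin t * sin p)\<^sup>2 + (cos t)\<^sup>2 = (1::real)"
  unfolding power_mult_distrib using sin_cos_squared_add[of t] sin_cos_squared_add[of p] by algebra

lemma sin_fst_nonneg_cbox: "v \<in> cbox (0, 0) (pi, 2 * pi) \<Longrightarrow> 0 \<le> sin (fst v)"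
  by (cases v) (auto intro: sin_ge_zero)

lemma continuous_on_case_prod_3 [continuous_intros]:
  "continuous_on S (\<lambda>v. g (fst v) (fst (snd v)) (snd (snd v))) \<Longrightarrow> continuous_on S (\<lambda>(x, y, z). g x y z)"
  by (simp add: case_prod_beta')

lemma continuous_on_sphere_integrand:
  fixes g :: "real \<Rightarrow> real \<Rightarrow> real \<Rightarrow> real"
  assumes "continuous_on UNIV (\<lambda>(x, y, z). g x y z)"
  shows "continuous_on S (\<lambda>(t, p). g (sin t * cos p) (sin t * sin p) (cos t) * sin t)"
proof -
  have g_cont: "continuous_on S (\<lambda>v. (\<lambda>(x, y, z). g x y z)
          (sin (fst v) * cos (snd v), sin (fst v) * sin (snd v), cos (fst v)))"
    by (rule continuous_on_compose2[OF assms _ subset_UNIV]) (intro continuous_intros)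
  show ?thesis
    unfolding case_prod_beta' by (rule continuous_on_mult) (use g_cont in simp, intro continuous_intros)
qed

lemma sphere_integrand_integrable:
  fixes g :: "real \<Rightarrow> real \<Rightarrow> real \<Rightarrow> real"
  assumes "continuous_on UNIV (\<lambda>(x, y, z). g x y z)"
  shows "(\<lambda>(t, p). g (sin t * cos p) (sin t * sin p) (cos t) * sin t) integrable_on cbox (0, 0) (pi, 2 * pi)"
  by (rule integrable_continuous[OF continuous_on_sphere_integrand[OF assms]])

lemma sphere_integral_add:
  fixes g h :: "real \<Rightarrow> real \<Rightarrow> real \<Rightarrow> real"
  assumes "continuous_on UNIV (\<lambda>(x, y, z). g x y z)" "continuous_on UNIV (\<lambda>(x, y, z). h x y z)"
  shows "sphere_integral (\<lambda>x y z. g x y z + h x y z) = sphere_integral g + sphere_integral h"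
  unfolding sphere_integral_def
  using integral_add[OF sphere_integrand_integrable[OF assms(1)] sphere_integrand_integrable[OF assms(2)]]
  by (simp add: case_prod_beta' distrib_right)

lemma sphere_integral_diff:
  fixes g h :: "real \<Rightarrow> real \<Rightarrow> real \<Rightarrow> real"
  assumes "continuous_on UNIV (\<lambda>(x, y, z). g x y z)" "continuous_on UNIV (\<lambda>(x, y, z). h x y z)"
  shows "sphere_integral (\<lambda>x y z. g x y z - h x y z) = sphere_integral g - sphere_integral h"
  unfolding sphere_integral_def
  using integral_diff[OF sphere_integrand_integrable[OF assms(1)] sphere_integrand_integrable[OF assms(2)]]
  by (simp add: case_prod_beta' left_diff_distrib)

lemma sphere_integral_cmult: "sphere_integral (\<lambda>x y z. c * g x y z) = c * sphere_integral g"
  unfolding sphere_integral_def by (simp add: case_prod_beta' mult.assoc)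

lemma sphere_integral_divide: "sphere_integral (\<lambda>x y z. g x y z / c) = sphere_integral g / c"
  unfolding sphere_integral_def by (simp add: case_prod_beta')

lemma sphere_integral_mono:
  fixes g h :: "real \<Rightarrow> real \<Rightarrow> real \<Rightarrow> real"
  assumes "continuous_on UNIV (\<lambda>(x, y, z). g x y z)" "continuous_on UNIV (\<lambda>(x, y, z). h x y z)"
    and "\<And>x y z. x\<^sup>2 + y\<^sup>2 + z\<^sup>2 = 1 \<Longrightarrow> g x y z \<le> h x y z"
  shows "sphere_integral g \<le> sphere_integral h"
  unfolding sphere_integral_def
proof (rule integral_le[OF sphere_integrand_integrable[OF assms(1)] sphere_integrand_integrable[OF assms(2)]])
  fix v :: "real \<times> real"
  assume "v \<in> cbox (0, 0) (pi, 2 * pi)"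
  then show "(\<lambda>(t, p). g (sin t * cos p) (sin t * sin p) (cos t) * sin t) v
      \<le> (\<lambda>(t, p). h (sin t * cos p) (sin t * sin p) (cos t) * sin t) v"
    using sin_fst_nonneg_cbox[of v]
    by (auto simp: case_prod_beta intro!: mult_right_mono assms(3) sphere_coords_on_sphere)
qed

lemma sphere_integral_pos:
  fixes g :: "real \<Rightarrow> real \<Rightarrow> real \<Rightarrow> real"
  assumes cont: "continuous_on UNIV (\<lambda>(x, y, z). g x y z)"
    and nonneg: "\<And>x y z. x\<^sup>2 + y\<^sup>2 + z\<^sup>2 = 1 \<Longrightarrow> 0 \<le> g x y z"
    and "0 < t" "t < pi" "0 \<le> p" "p \<le> 2 * pi"
    and "0 < g (sin t * cos p) (sin t * sin p) (cos t)"
  shows "0 < sphere_integral g"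
proof -
  let ?f = "\<lambda>(t, p). g (sin t * cos p) (sin t * sin p) (cos t) * sin t"
  have f_nonneg: "0 \<le> ?f v" if "v \<in> cbox (0, 0) (pi, 2 * pi)" for v
    using sin_fst_nonneg_cbox[OF that] nonneg[OF sphere_coords_on_sphere]
    by (simp add: case_prod_beta)
  have "box (0::real, 0::real) (pi, 2 * pi) \<noteq> {}"
    by (auto simp: box_ne_empty Basis_prod_def)
  moreover have "(t, p) \<in> cbox (0, 0) (pi, 2 * pi)" "?f (t, p) \<noteq> 0"
    using assms sin_gt_zero[of t] by auto
  ultimately have "integral (cbox (0, 0) (pi, 2 * pi)) ?f \<noteq> 0"
    using integral_cbox_eq_0_iff[OF continuous_on_sphere_integrand[OF cont]] f_nonneg by blast
  moreover have "0 \<le> integral (cbox (0, 0) (pi, 2 * pi)) ?f"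
    by (rule integral_nonneg[OF sphere_integrand_integrable[OF cont] f_nonneg])
  ultimately show ?thesis
    unfolding sphere_integral_def by linarith
qed

lemma sphere_integral_iterated:
  fixes g :: "real \<Rightarrow> real \<Rightarrow> real \<Rightarrow> real"
  assumes "continuous_on UNIV (\<lambda>(x, y, z). g x y z)"
  shows "sphere_integral g =
    integral {0..2 * pi} (\<lambda>p. integral {0..pi} (\<lambda>t. g (sin t * cos p) (sin t * sin p) (cos t) * sin t))"
proof -
  have cont: "continuous_on (cbox (0, 0) (pi, 2 * pi))
      (\<lambda>(t, p). g (sin t * cos p) (sin t * sin p) (cos t) * sin t)"
    by (rule continuous_on_sphere_integrand[OF assms])
  show ?thesis
    unfolding sphere_integral_def integral_prod_continuous[OF cont]
    using integral_swap_continuous[of 0 0 pi "2 * pi" "\<lambda>t p. g (sin t * cos p) (sin t * sin p) (cos t) * sin t"] cont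
    by (simp add: cbox_interval)
qed

lemma sphere_integral_one: "sphere_integral (\<lambda>x y z. 1) = 4 * pi"
proof -
  have "continuous_on UNIV (\<lambda>(x::real, y::real, z::real). 1::real)"
    by (simp add: case_prod_beta)
  then show ?thesis
    by (simp add: sphere_integral_iterated)
qed

lemma sphere_integral_x2_pos: "0 < sphere_integral (\<lambda>x y z. x\<^sup>2)"
  by (rule sphere_integral_pos[of _ "pi / 2" 0], intro continuous_intros) simp_all

lemma integral_cos_double_period: "integral {0..2 * pi} (\<lambda>p. cos (2 * p)) = 0"
proof -
  have "((\<lambda>p. cos (2 * p)) has_integral sin (2 * (2 * pi)) / 2 - sin (2 * 0) / 2) {0..2 * pi}"
    by (rule fundamental_theorem_of_calculus)
      (auto intro!: derivative_eq_intros simp flip: has_real_derivative_iff_has_vector_derivative)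
  then show ?thesis
    by (simp add: integral_unique)
qed

lemma sphere_integral_zonal_x2_minus_y2:
  fixes h :: "real \<Rightarrow> real"
  assumes "continuous_on UNIV h"
  shows "sphere_integral (\<lambda>x y z. (x\<^sup>2 - y\<^sup>2) * h z) = 0"
proof -
  let ?C = "integral {0..pi} (\<lambda>t. (sin t)\<^sup>2 * h (cos t) * sin t)"
  have cont: "continuous_on UNIV (\<lambda>(x, y, z). (x\<^sup>2 - y\<^sup>2) * h z)"
    by (intro continuous_intros continuous_on_compose2[OF assms]) auto
  have "integral {0..pi} (\<lambda>t. ((sin t * cos p)\<^sup>2 - (sin t * sin p)\<^sup>2) * h (cos t) * sin t)
      = integral {0..pi} (\<lambda>t. cos (2 * p) * ((sin t)\<^sup>2 * h (cos t) * sin t))" for p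
    unfolding cos_double by (intro integral_cong) (simp add: algebra_simps)
  then have "sphere_integral (\<lambda>x y z. (x\<^sup>2 - y\<^sup>2) * h z) = integral {0..2 * pi} (\<lambda>p. cos (2 * p)) * ?C"
    by (simp add: sphere_integral_iterated[OF cont])
  then show ?thesis
    by (simp add: integral_cos_double_period)
qed

lemma continuous_on_bm_weight [continuous_intros]:
  "continuous_on S f \<Longrightarrow> continuous_on S g \<Longrightarrow> continuous_on S h \<Longrightarrow>
    continuous_on S (\<lambda>v. bm_weight a b c (f v) (g v) (h v))"
  unfolding bm_weight_def by (intro continuous_intros)

lemma bm_weight_pos: "0 < bm_weight a b c x y z"
  by (simp add: bm_weight_def)

lemma bm_weight_bounds:
  assumes "x\<^sup>2 + y\<^sup>2 + z\<^sup>2 = 1" "\<bar>a\<bar> \<le> A" "\<bar>b\<bar> \<le> A" "\<bar>c\<bar> \<le> A"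
  shows "exp (- A) \<le> bm_weight a b c x y z \<and> bm_weight a b c x y z \<le> exp A"
proof -
  have "\<bar>a * x\<^sup>2 + b * y\<^sup>2 + c * z\<^sup>2\<bar> \<le> A * x\<^sup>2 + A * y\<^sup>2 + A * z\<^sup>2"
    using assms(2-4) by (intro abs_triangle_ineq[THEN order_trans] add_mono)
      (auto simp: abs_mult intro: mult_right_mono)
  also have "\<dots> = A"
    using assms(1) by (simp flip: distrib_left)
  finally show ?thesis
    by (simp add: bm_weight_def abs_le_iff)
qed

lemma bm_Z_pos: "0 < bm_Z a b c"
  unfolding bm_Z_def
  by (rule sphere_integral_pos[of _ "pi / 2" 0], intro continuous_intros) (simp_all add: bm_weight_pos less_imp_le)

lemma sphere_integral_bm_rho:
  "sphere_integral (\<lambda>x y z. q x y z * bm_rho a b c x y z) =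
    sphere_integral (\<lambda>x y z. q x y z * bm_weight a b c x y z) / bm_Z a b c"
  unfolding bm_rho_def bm_Z_def times_divide_eq_right by (rule sphere_integral_divide)

lemma bm_multipliers_moments:
  assumes "bm_multipliers l1 l2 l3 a b c"
  shows "sphere_integral (\<lambda>x y z. x\<^sup>2 * bm_weight a b c x y z) = (l1 + 1/3) * bm_Z a b c"
    and "sphere_integral (\<lambda>x y z. y\<^sup>2 * bm_weight a b c x y z) = (l2 + 1/3) * bm_Z a b c"
    and "sphere_integral (\<lambda>x y z. z\<^sup>2 * bm_weight a b c x y z) = (l3 + 1/3) * bm_Z a b c"
  using assms bm_Z_pos[of a b c] unfolding bm_multipliers_def sphere_integral_bm_rho
  by (simp_all add: field_simps)

lemma sphere_integral_y2_weight_less_x2_weight: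
  assumes "b < a"
  shows "sphere_integral (\<lambda>x y z. y\<^sup>2 * bm_weight a b c x y z)
    < sphere_integral (\<lambda>x y z. x\<^sup>2 * bm_weight a b c x y z)"
proof -
  let ?w = "bm_weight a b c"
  (* the weight with a and b replaced by their mean, written as a function of z on the sphere *)
  define h where "h z = exp (c * z\<^sup>2 + (a + b) / 2 * (1 - z\<^sup>2))" for z :: real
  have cont_h: "continuous_on UNIV h"
    unfolding h_def by (intro continuous_intros)
  have cont_w: "continuous_on UNIV (\<lambda>(x, y, z). (x\<^sup>2 - y\<^sup>2) * ?w x y z)"
    by (intro continuous_intros)
  have cont_wh: "continuous_on UNIV (\<lambda>(x, y, z). (x\<^sup>2 - y\<^sup>2) * h z)"
    by (intro continuous_intros continuous_on_compose2[OF cont_h]) auto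
  have nonneg: "0 \<le> (x\<^sup>2 - y\<^sup>2) * (?w x y z - h z)" if "x\<^sup>2 + y\<^sup>2 + z\<^sup>2 = 1" for x y z
  proof -
    have "1 - z\<^sup>2 = x\<^sup>2 + y\<^sup>2"
      using that by simp
    then have exponent: "a * x\<^sup>2 + b * y\<^sup>2 + c * z\<^sup>2 =
        c * z\<^sup>2 + (a + b) / 2 * (1 - z\<^sup>2) + (a - b) / 2 * (x\<^sup>2 - y\<^sup>2)"
      by (subst \<open>1 - z\<^sup>2 = x\<^sup>2 + y\<^sup>2\<close>) (simp add: field_simps)
    show ?thesis
    proof (cases "y\<^sup>2 \<le> x\<^sup>2")
      case True
      then have "h z \<le> ?w x y z"
        using assms by (simp add: bm_weight_def h_def exponent)
      with True show ?thesis
        by simp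
    next
      case False
      then have "?w x y z \<le> h z"
        using assms by (simp add: bm_weight_def h_def exponent mult_nonneg_nonpos)
      with False show ?thesis
        by (simp add: mult_nonpos_nonpos)
    qed
  qed
  have "0 < sphere_integral (\<lambda>x y z. (x\<^sup>2 - y\<^sup>2) * ?w x y z - (x\<^sup>2 - y\<^sup>2) * h z)"
  proof (rule sphere_integral_pos[of _ "pi / 2" 0])
    show "continuous_on UNIV (\<lambda>(x, y, z). (x\<^sup>2 - y\<^sup>2) * ?w x y z - (x\<^sup>2 - y\<^sup>2) * h z)"
      using continuous_on_diff[OF cont_w cont_wh] by (simp add: case_prod_beta)
    show "0 < (\<lambda>x y z. (x\<^sup>2 - y\<^sup>2) * ?w x y z - (x\<^sup>2 - y\<^sup>2) * h z)
        (sin (pi / 2) * cos 0) (sin (pi / 2) * sin 0) (cos (pi / 2))"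
      using assms by (simp add: bm_weight_def h_def)
  qed (use nonneg in \<open>auto simp: right_diff_distrib\<close>)
  also have "\<dots> = sphere_integral (\<lambda>x y z. (x\<^sup>2 - y\<^sup>2) * ?w x y z)"
    by (simp add: sphere_integral_diff[OF cont_w cont_wh] sphere_integral_zonal_x2_minus_y2[OF cont_h])
  also have "\<dots> = sphere_integral (\<lambda>x y z. x\<^sup>2 * ?w x y z) - sphere_integral (\<lambda>x y z. y\<^sup>2 * ?w x y z)"
    unfolding left_diff_distrib by (intro sphere_integral_diff continuous_intros)
  finally show ?thesis
    by simp
qed

lemma has_real_derivative_polar_bm_weight:
  "((\<lambda>t. - cos t * (sin t)\<^sup>2 * bm_weight a b c (sin t * cos p) (sin t * sin p) (cos t))
    has_real_derivative
      ((sin t * cos p)\<^sup>2 + (sin t * sin p)\<^sup>2 - 2 * (cos t)\<^sup>2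
        - 2 * (cos t)\<^sup>2 * ((a - c) * (sin t * cos p)\<^sup>2 + (b - c) * (sin t * sin p)\<^sup>2))
      * bm_weight a b c (sin t * cos p) (sin t * sin p) (cos t) * sin t) (at t)"
  unfolding bm_weight_def
  by (rule derivative_eq_intros refl | simp)+
    (unfold power_mult_distrib, insert sin_cos_squared_add[of p] sin_cos_squared_add[of t], algebra)

lemma sphere_integral_bm_weight_by_parts:
  "sphere_integral (\<lambda>x y z. (x\<^sup>2 + y\<^sup>2 - 2 * z\<^sup>2) * bm_weight a b c x y z) =
    2 * sphere_integral (\<lambda>x y z. z\<^sup>2 * ((a - c) * x\<^sup>2 + (b - c) * y\<^sup>2) * bm_weight a b c x y z)"
proof -
  let ?w = "bm_weight a b c"
  define D where "D x y z = (x\<^sup>2 + y\<^sup>2 - 2 * z\<^sup>2 - 2 * z\<^sup>2 * ((a - c) * x\<^sup>2 + (b - c) * y\<^sup>2)) * ?w x y z"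
    for x y z
  have cont_D: "continuous_on UNIV (\<lambda>(x, y, z). D x y z)"
    unfolding D_def by (intro continuous_intros)
  have "integral {0..pi} (\<lambda>t. D (sin t * cos p) (sin t * sin p) (cos t) * sin t) = 0" for p
  proof -
    (* the antiderivative vanishes at both poles because of the factor (sin t)^2 *)
    let ?G = "\<lambda>t. - cos t * (sin t)\<^sup>2 * ?w (sin t * cos p) (sin t * sin p) (cos t)"
    have "((\<lambda>t. D (sin t * cos p) (sin t * sin p) (cos t) * sin t) has_integral ?G pi - ?G 0) {0..pi}"
      unfolding D_def
      by (rule fundamental_theorem_of_calculus, simp, rule has_vector_derivative_at_within,
          rule has_real_derivative_polar_bm_weight[unfolded has_real_derivative_iff_has_vector_derivative])
    then show ?thesis
      by (simp add: integral_unique)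
  qed
  then have "sphere_integral D = 0"
    by (simp add: sphere_integral_iterated[OF cont_D])
  moreover have "sphere_integral D =
      sphere_integral (\<lambda>x y z. (x\<^sup>2 + y\<^sup>2 - 2 * z\<^sup>2) * ?w x y z)
      - sphere_integral (\<lambda>x y z. 2 * (z\<^sup>2 * ((a - c) * x\<^sup>2 + (b - c) * y\<^sup>2) * ?w x y z))"
    unfolding D_def left_diff_distrib mult.assoc
    by (intro sphere_integral_diff continuous_intros)
  ultimately show ?thesis
    by (simp add: sphere_integral_cmult)
qed

lemma sphere_integral_z2_weight_less:
  assumes "c < a" "c \<le> b"
  shows "2 * sphere_integral (\<lambda>x y z. z\<^sup>2 * bm_weight a b c x y z)
    < sphere_integral (\<lambda>x y z. x\<^sup>2 * bm_weight a b c x y z)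
      + sphere_integral (\<lambda>x y z. y\<^sup>2 * bm_weight a b c x y z)"
proof -
  let ?w = "bm_weight a b c"
  have "0 < sphere_integral (\<lambda>x y z. z\<^sup>2 * ((a - c) * x\<^sup>2 + (b - c) * y\<^sup>2) * ?w x y z)"
  proof (rule sphere_integral_pos[of _ "pi / 4" 0])
    show "continuous_on UNIV (\<lambda>(x, y, z). z\<^sup>2 * ((a - c) * x\<^sup>2 + (b - c) * y\<^sup>2) * ?w x y z)"
      by (intro continuous_intros)
    show "0 \<le> z\<^sup>2 * ((a - c) * x\<^sup>2 + (b - c) * y\<^sup>2) * ?w x y z" for x y z
      using assms bm_weight_pos[of a b c x y z] by (intro mult_nonneg_nonneg add_nonneg_nonneg) auto
    show "0 < (\<lambda>x y z. z\<^sup>2 * ((a - c) * x\<^sup>2 + (b - c) * y\<^sup>2) * ?w x y z)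
        (sin (pi / 4) * cos 0) (sin (pi / 4) * sin 0) (cos (pi / 4))"
      using assms by (simp add: bm_weight_def sin_45 cos_45 power_divide)
  qed simp_all
  moreover have "sphere_integral (\<lambda>x y z. (x\<^sup>2 + y\<^sup>2 - 2 * z\<^sup>2) * ?w x y z) =
      sphere_integral (\<lambda>x y z. x\<^sup>2 * ?w x y z + y\<^sup>2 * ?w x y z)
      - sphere_integral (\<lambda>x y z. 2 * (z\<^sup>2 * ?w x y z))"
    unfolding left_diff_distrib distrib_right mult.assoc
    by (intro sphere_integral_diff continuous_intros)
  moreover have "sphere_integral (\<lambda>x y z. x\<^sup>2 * ?w x y z + y\<^sup>2 * ?w x y z) =
      sphere_integral (\<lambda>x y z. x\<^sup>2 * ?w x y z) + sphere_integral (\<lambda>x y z. y\<^sup>2 * ?w x y z)"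
    by (intro sphere_integral_add continuous_intros)
  ultimately show ?thesis
    using sphere_integral_bm_weight_by_parts[of a b c] by (simp add: sphere_integral_cmult)
qed

lemma bm_multiplier_1_le_2:
  assumes "bm_multipliers l1 l2 l3 \<mu>1 \<mu>2 \<mu>3" "l1 \<le> l2"
  shows "\<mu>1 \<le> \<mu>2"
proof (rule ccontr)
  assume "\<not> \<mu>1 \<le> \<mu>2"
  then have "(l2 + 1/3) * bm_Z \<mu>1 \<mu>2 \<mu>3 < (l1 + 1/3) * bm_Z \<mu>1 \<mu>2 \<mu>3"
    using sphere_integral_y2_weight_less_x2_weight[of \<mu>2 \<mu>1 \<mu>3]
    by (simp add: bm_multipliers_moments[OF assms(1)])
  with assms(2) bm_Z_pos[of \<mu>1 \<mu>2 \<mu>3] show False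
    by (simp add: mult_less_cancel_right)
qed

lemma bm_multiplier_1_le_3:
  assumes "bm_multipliers l1 l2 l3 \<mu>1 \<mu>2 \<mu>3" "l1 \<le> l2" "l2 \<le> l3"
  shows "\<mu>1 \<le> \<mu>3"
proof (rule ccontr)
  assume "\<not> \<mu>1 \<le> \<mu>3"
  moreover have "\<mu>1 \<le> \<mu>2"
    using assms(1,2) by (rule bm_multiplier_1_le_2)
  ultimately have "2 * (l3 + 1/3) * bm_Z \<mu>1 \<mu>2 \<mu>3 < (l1 + 1/3 + (l2 + 1/3)) * bm_Z \<mu>1 \<mu>2 \<mu>3"
    using sphere_integral_z2_weight_less[of \<mu>3 \<mu>1 \<mu>2]
    by (simp add: bm_multipliers_moments[OF assms(1)] distrib_right)
  with assms(2,3) bm_Z_pos[of \<mu>1 \<mu>2 \<mu>3] show False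
    by (simp add: mult_less_cancel_right)
qed

lemma bm_multipliers_eigenvalue_lower_bound:
  assumes "bm_multipliers l1 l2 l3 \<mu>1 \<mu>2 \<mu>3" "\<bar>\<mu>1\<bar> \<le> A" "\<bar>\<mu>2\<bar> \<le> A" "\<bar>\<mu>3\<bar> \<le> A"
  shows "exp (- 2 * A) * sphere_integral (\<lambda>x y z. x\<^sup>2) / (4 * pi) \<le> l1 + 1/3"
proof -
  let ?w = "bm_weight \<mu>1 \<mu>2 \<mu>3" and ?Z = "bm_Z \<mu>1 \<mu>2 \<mu>3"
  have weight: "exp (- A) \<le> ?w x y z" "?w x y z \<le> exp A" if "x\<^sup>2 + y\<^sup>2 + z\<^sup>2 = 1" for x y z
    using bm_weight_bounds[OF that assms(2-4)] by auto
  have "exp (- A) * sphere_integral (\<lambda>x y z. x\<^sup>2) \<le> sphere_integral (\<lambda>x y z. x\<^sup>2 * ?w x y z)"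
    unfolding sphere_integral_cmult[symmetric]
  proof (rule sphere_integral_mono)
    show "exp (- A) * x\<^sup>2 \<le> x\<^sup>2 * ?w x y z" if "x\<^sup>2 + y\<^sup>2 + z\<^sup>2 = 1" for x y z
      using mult_right_mono[OF weight(1)[OF that], of "x\<^sup>2"] by (simp add: mult.commute)
  qed (intro continuous_intros)+
  then have lower: "exp (- A) * sphere_integral (\<lambda>x y z. x\<^sup>2) \<le> (l1 + 1/3) * ?Z"
    by (simp add: bm_multipliers_moments[OF assms(1)])
  have "?Z \<le> sphere_integral (\<lambda>x y z. exp A * 1)"
    unfolding bm_Z_def
  proof (rule sphere_integral_mono)
    show "?w x y z \<le> exp A * 1" if "x\<^sup>2 + y\<^sup>2 + z\<^sup>2 = 1" for x y z
      using weight(2)[OF that] by simp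
  qed (intro continuous_intros)+
  then have upper: "?Z \<le> exp A * (4 * pi)"
    using sphere_integral_cmult[of "exp A" "\<lambda>x y z. 1"] by (simp add: sphere_integral_one)
  have "0 < exp (- A) * sphere_integral (\<lambda>x y z. x\<^sup>2)"
    using sphere_integral_x2_pos by simp
  with lower have "0 < (l1 + 1/3) * ?Z"
    by linarith
  then have "0 < l1 + 1/3"
    using bm_Z_pos[of \<mu>1 \<mu>2 \<mu>3] by (simp add: zero_less_mult_iff)
  then have "(l1 + 1/3) * ?Z \<le> (l1 + 1/3) * (exp A * (4 * pi))"
    using upper by (simp add: mult_left_mono)
  with lower have "exp (- A) * sphere_integral (\<lambda>x y z. x\<^sup>2) \<le> (l1 + 1/3) * (exp A * (4 * pi))"
    by (rule order_trans)
  moreover have "exp (- A) = exp A * exp (- 2 * A)"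
    by (simp flip: exp_add)
  ultimately have "exp (- 2 * A) * sphere_integral (\<lambda>x y z. x\<^sup>2) \<le> (l1 + 1/3) * (4 * pi)"
    by (simp add: ac_simps)
  then show ?thesis
    by (simp add: pos_divide_le_eq)
qed

theorem lemma2p2:
  fixes M :: real
  assumes "M > 0"
  shows "\<exists>\<eta>>0. \<forall>l1 l2 l3 \<mu>1 \<mu>2 \<mu>3.
           -1/3 < l1 \<and> l1 \<le> l2 \<and> l2 \<le> l3 \<and> l3 < 2/3 \<and> l1 + l2 + l3 = 0 \<and>
           bm_multipliers l1 l2 l3 \<mu>1 \<mu>2 \<mu>3 \<and> l1 + 1/3 < \<eta>
           \<longrightarrow> \<mu>1 < - M"
proof -
  define \<eta> where "\<eta> = exp (- 2 * (2 * M)) * sphere_integral (\<lambda>x y z. x\<^sup>2) / (4 * pi)"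
  have "0 < \<eta>"
    unfolding \<eta>_def using sphere_integral_x2_pos by simp
  moreover have "\<mu>1 < - M"
    if "l1 \<le> l2" "l2 \<le> l3" "bm_multipliers l1 l2 l3 \<mu>1 \<mu>2 \<mu>3" "l1 + 1/3 < \<eta>"
    for l1 l2 l3 \<mu>1 \<mu>2 \<mu>3
  proof (rule ccontr)
    assume "\<not> \<mu>1 < - M"
    moreover have "\<mu>1 \<le> \<mu>2" "\<mu>1 \<le> \<mu>3"
      using bm_multiplier_1_le_2 bm_multiplier_1_le_3 that by blast+
    moreover have "\<mu>1 + \<mu>2 + \<mu>3 = 0"
      using that(3) by (simp add: bm_multipliers_def)
    ultimately have "\<bar>\<mu>1\<bar> \<le> 2 * M" "\<bar>\<mu>2\<bar> \<le> 2 * M" "\<bar>\<mu>3\<bar> \<le> 2 * M"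
      using assms by linarith+
    then have "\<eta> \<le> l1 + 1/3"
      unfolding \<eta>_def using bm_multipliers_eigenvalue_lower_bound[OF that(3)] by blast
    with that(4) show False
      by simp
  qed
  ultimately show ?thesis
    by blast
qed

end
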